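(* Let $n\ge3$, $1\le i\le n-2$ and $j=i+1$. In the group algebra $\mathbb{Q}(t_0,t_1)[B_n]$, let $I$ be the two-sided ideal generated by the elements \[ s_k^2+(1-t_0-t_1)s_k+(t_0t_1-t_0-t_1)\cdot1+t_0t_1\,\overline{s}_k,\qquad k=1,\dots,n-1. \] Let \[ X=\overline{s}_is_js_i-s_is_j\overline{s}_i-\overline{s}_i\overline{s}_js_i+s_i\overline{s}_j\overline{s}_i-\big(s_is_j-s_i\overline{s}_j-\overline{s}_is_j+\overline{s}_i\overline{s}_j-s_js_i+s_j\overline{s}_i+\overline{s}_js_i-\overline{s}_j\overline{s}_i\big) \] and $Y=s_j\overline{s}_is_j-Z$, where \[ \begin{aligned} Z={}&(t_0t_1+1-t_0-t_1)s_i+(t_0+t_1-t_0t_1-1)\overline{s}_i-(t_0+t_1-1)s_is_j+(t_0+t_1-1)\overline{s}_is_j+t_0t_1\,s_i\overline{s}_j-t_0t_1\,\overline{s}_i\overline{s}_j\\ &+s_js_i-s_j\overline{s}_i-(t_0+t_1-t_0t_1)\overline{s}_js_i+(t_0+t_1-t_0t_1)\overline{s}_j\overline{s}_i-(t_0+t_1)s_is_j\overline{s}_i+(t_0+t_1)s_i\overline{s}_j\overline{s}_i\\ &+s_is_js_i-t_0t_1\,\overline{s}_i\overline{s}_j\overline{s}_i+t_0t_1\,\overline{s}_js_i\overline{s}_j. \end{aligned} \] Then the two-sided ideal generated by $I$ and $X$ equals the two-sided ideal generated by $I$ and $Y$; that is, the relation $X=0$ is equivalent to the relation $Y=0$ modulo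 the relations generating $I$.
   Context: $B_n$ is the Artin braid group with standard generators $s_1,\dots,s_{n-1}$ and $\overline{s}_k=s_k^{-1}$; $\mathbb{Q}(t_0,t_1)[B_n]$ is its group algebra over the field of rational functions in two variables. *)

theory Defs
  imports Main "HOL-Library.Poly_Mapping" "HOL-Computational_Algebra.Polynomial"
    "HOL-Computational_Algebra.Fraction_Field"
begin

text \<open>Q(t0,t1) is realised as Q(t0)(t1) = Frac(Frac(Q[t0])[t1]).\<close>

type_synonym K = "rat poly fract poly fract"

definition t0 :: K where "t0 = Fract [: Fract [:0, 1:] 1 :] 1"
definition t1 :: K where "t1 = Fract [:0, 1:] 1"

section \<open>Free monoid on the letters s_k (True) and sbar_k (False)\<close>

datatype fword = FW "(nat \<times> bool) list"

fun fword_app :: "fword \<Rightarrow> fword \<Rightarrow> fword" where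
  "fword_app (FW u) (FW v) = FW (u @ v)"

instantiation fword :: monoid_add
begin
definition zero_fword :: fword where "zero_fword = FW []"
definition plus_fword :: "fword \<Rightarrow> fword \<Rightarrow> fword" where "plus_fword = fword_app"
instance
proof
  fix a b c :: fword
  show "a + b + c = a + (b + c)"
    by (cases a; cases b; cases c) (simp add: plus_fword_def)
  show "0 + a = a" by (cases a) (simp add: plus_fword_def zero_fword_def)
  show "a + 0 = a" by (cases a) (simp add: plus_fword_def zero_fword_def)
qed
end

text \<open>Free associative K-algebra on the letters (noncommutative polynomials):
  finitely supported K-valued functions on words, with convolution product.\<close>

type_synonym falg = "fword \<Rightarrow>\<^sub>0 K"

definition sc :: "K \<Rightarrow> falg" where "sc c = Poly_Mapping.single 0 c"

definition s :: "nat \<Rightarrow> falg" where "s k = Poly_Mapping.single (FW [(k, True)]) 1"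
definition sb :: "nat \<Rightarrow> falg" where "sb k = Poly_Mapping.single (FW [(k, False)]) 1"

definition free_alg_n :: "nat \<Rightarrow> falg set" where
  "free_alg_n n = {f. \<forall>w \<in> Poly_Mapping.keys f.
      \<forall>x \<in> set (case w of FW l \<Rightarrow> l). 1 \<le> fst x \<and> fst x \<le> n - 1}"

definition ideal_gen :: "'a::ring_1 set \<Rightarrow> 'a set \<Rightarrow> 'a set" where
  "ideal_gen R S = \<Inter>{J. J \<subseteq> R \<and> S \<subseteq> J \<and> 0 \<in> J \<and> (\<forall>a\<in>J. \<forall>b\<in>J. a + b \<in> J)
        \<and> (\<forall>a\<in>J. \<forall>r\<in>R. r * a \<in> J \<and> a * r \<in> J)}"

text \<open>Defining relations of the group algebra Q(t0,t1)[B_n] as a quotient of the free algebra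
  (Artin presentation, plus s_k sbar_k = sbar_k s_k = 1).\<close>

definition braid_rels :: "nat \<Rightarrow> falg set" where
  "braid_rels n =
     {s k * sb k - 1 | k. 1 \<le> k \<and> k \<le> n - 1}
   \<union> {sb k * s k - 1 | k. 1 \<le> k \<and> k \<le> n - 1}
   \<union> {s k * s (k+1) * s k - s (k+1) * s k * s (k+1) | k. 1 \<le> k \<and> k + 1 \<le> n - 1}
   \<union> {s k * s l - s l * s k | k l. 1 \<le> k \<and> k + 2 \<le> l \<and> l \<le> n - 1}"

definition I_gens :: "nat \<Rightarrow> falg set" where
  "I_gens n = {s k * s k + sc (1 - t0 - t1) * s k + sc (t0*t1 - t0 - t1)
                + sc (t0*t1) * sb k | k. 1 \<le> k \<and> k \<le> n - 1}"

definition relX :: "nat \<Rightarrow> nat \<Rightarrow> falg" where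
  "relX i j = sb i * s j * s i - s i * s j * sb i - sb i * sb j * s i + s i * sb j * sb i
     - (s i * s j - s i * sb j - sb i * s j + sb i * sb j - s j * s i + s j * sb i
        + sb j * s i - sb j * sb i)"

definition relZ :: "nat \<Rightarrow> nat \<Rightarrow> falg" where
  "relZ i j =
       sc (t0*t1 + 1 - t0 - t1) * s i + sc (t0 + t1 - t0*t1 - 1) * sb i
     - sc (t0 + t1 - 1) * s i * s j + sc (t0 + t1 - 1) * sb i * s j
     + sc (t0*t1) * s i * sb j - sc (t0*t1) * sb i * sb j
     + s j * s i - s j * sb i - sc (t0 + t1 - t0*t1) * sb j * s i
     + sc (t0 + t1 - t0*t1) * sb j * sb i - sc (t0 + t1) * s i * s j * sb i
     + sc (t0 + t1) * s i * sb j * sb i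
     + s i * s j * s i - sc (t0*t1) * sb i * sb j * sb i + sc (t0*t1) * sb j * s i * sb j"

definition relY :: "nat \<Rightarrow> nat \<Rightarrow> falg" where
  "relY i j = s j * sb i * s j - relZ i j"

end

theory Submission imports Defs begin

text \<open>Write a, b for s_i, s_j and a', b' for their inverses. The braid relation aba = bab and
  the inverse relations give the conjugation rules b'ab = aba', b'a'b = ab'a' and b'a'b' = a'b'a';
  with these and the quadratic relation for b, the element Y + X b is an explicit combination of
  defining relations. As b is invertible, every ideal containing the defining relations contains X
  iff it contains Y, and the two generated ideals, being intersections of the same ideals, coincide.\<close>

lemma lookup_sc_mult: "Poly_Mapping.lookup (sc c * f) w = c * Poly_Mapping.lookup f w"
  unfolding sc_def Poly_Mapping.lookup_mult Poly_Mapping.lookup_single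
  by (simp add: mult_when when_mult)

lemma lookup_mult_sc: "Poly_Mapping.lookup (f * sc c) w = c * Poly_Mapping.lookup f w"
proof -
  have "(\<Sum>v. (c when v = 0 when w = u + v)) = (c when w = u)" for u
  proof -
    have "(c when v = 0 when w = u + v) = ((c when w = u) when v = 0)" for v
      by (simp add: when_def)
    then show ?thesis by simp
  qed
  then show ?thesis
    unfolding sc_def Poly_Mapping.lookup_mult Poly_Mapping.lookup_single
    by (simp add: mult_when when_mult mult.commute)
qed

lemma sc_mult_commute: "sc c * f = f * sc c"
  by (rule poly_mapping_eqI) (simp add: lookup_sc_mult lookup_mult_sc)

lemma sc_add: "sc (x + y) = sc x + sc y" by (simp add: sc_def single_add)
lemma sc_diff: "sc (x - y) = sc x - sc y" by (simp add: sc_def single_diff)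
lemma sc_uminus: "sc (- x) = - sc x" by (simp add: sc_def single_uminus)
lemma sc_mult: "sc (x * y) = sc x * sc y" by (simp add: sc_def mult_single)
lemma sc_1: "sc 1 = 1" by (simp add: sc_def)

lemmas sc_hom = sc_add sc_diff sc_uminus sc_mult sc_1

lemma letter_mult_sc:
  "s k * sc c = sc c * s k" "sb k * sc c = sc c * sb k"
  "s k * (sc c * f) = sc c * (s k * f)" "sb k * (sc c * f) = sc c * (sb k * f)"
  by (metis mult.assoc sc_mult_commute)+

fun fword_letters :: "fword \<Rightarrow> (nat \<times> bool) set" where
  "fword_letters (FW l) = set l"

lemma fword_letters_zero: "fword_letters 0 = {}"
  by (simp add: zero_fword_def)

lemma fword_letters_plus: "fword_letters (u + v) = fword_letters u \<union> fword_letters v"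
  by (cases u; cases v) (simp add: plus_fword_def)

lemma mem_free_alg_n_iff:
  "f \<in> free_alg_n n \<longleftrightarrow>
    (\<forall>w \<in> Poly_Mapping.keys f. \<forall>x \<in> fword_letters w. 1 \<le> fst x \<and> fst x \<le> n - 1)"
proof -
  have "set (case w of FW l \<Rightarrow> l) = fword_letters w" for w
    by (cases w) simp
  then show ?thesis
    by (simp add: free_alg_n_def)
qed

lemma free_alg_n_add: "f \<in> free_alg_n n \<Longrightarrow> g \<in> free_alg_n n \<Longrightarrow> f + g \<in> free_alg_n n"
  unfolding mem_free_alg_n_iff using keys_add[of f g] by blast

lemma free_alg_n_diff: "f \<in> free_alg_n n \<Longrightarrow> g \<in> free_alg_n n \<Longrightarrow> f - g \<in> free_alg_n n"
  unfolding mem_free_alg_n_iff using keys_diff[of f g] by blast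

lemma free_alg_n_mult: "f \<in> free_alg_n n \<Longrightarrow> g \<in> free_alg_n n \<Longrightarrow> f * g \<in> free_alg_n n"
  unfolding mem_free_alg_n_iff using keys_mult[of f g] by (fastforce simp: fword_letters_plus)

lemma sc_mem_free_alg_n: "sc c \<in> free_alg_n n"
  unfolding mem_free_alg_n_iff sc_def by (simp add: fword_letters_zero)

lemma s_mem_free_alg_n: "1 \<le> k \<Longrightarrow> k \<le> n - 1 \<Longrightarrow> s k \<in> free_alg_n n"
  unfolding mem_free_alg_n_iff s_def by simp

lemma sb_mem_free_alg_n: "1 \<le> k \<Longrightarrow> k \<le> n - 1 \<Longrightarrow> sb k \<in> free_alg_n n"
  unfolding mem_free_alg_n_iff sb_def by simp

definition two_sided_ideal :: "'a::ring_1 set \<Rightarrow> 'a set \<Rightarrow> bool" where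
  "two_sided_ideal R J \<longleftrightarrow> J \<subseteq> R \<and> 0 \<in> J \<and> (\<forall>a\<in>J. \<forall>b\<in>J. a + b \<in> J)
     \<and> (\<forall>a\<in>J. \<forall>r\<in>R. r * a \<in> J \<and> a * r \<in> J)"

lemma ideal_gen_eq_Inter: "ideal_gen R S = \<Inter>{J. two_sided_ideal R J \<and> S \<subseteq> J}"
  unfolding ideal_gen_def two_sided_ideal_def by (rule arg_cong[where f = Inter]) blast

lemma ideal_gen_insert_cong:
  assumes "\<And>J. two_sided_ideal R J \<Longrightarrow> G \<subseteq> J \<Longrightarrow> x \<in> J \<longleftrightarrow> y \<in> J"
  shows "ideal_gen R (G \<union> {x}) = ideal_gen R (G \<union> {y})"
proof -
  have "{J. two_sided_ideal R J \<and> G \<union> {x} \<subseteq> J} = {J. two_sided_ideal R J \<and> G \<union> {y} \<subseteq> J}"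
    using assms by blast
  then show ?thesis
    unfolding ideal_gen_eq_Inter by simp
qed

context
  fixes R J :: "'a::ring_1 set"
  assumes ideal: "two_sided_ideal R J"
begin

lemma two_sided_ideal_add: "x \<in> J \<Longrightarrow> y \<in> J \<Longrightarrow> x + y \<in> J"
  using ideal unfolding two_sided_ideal_def by blast

lemma two_sided_ideal_mult_left: "x \<in> J \<Longrightarrow> r \<in> R \<Longrightarrow> r * x \<in> J"
  using ideal unfolding two_sided_ideal_def by blast

lemma two_sided_ideal_mult_right: "x \<in> J \<Longrightarrow> r \<in> R \<Longrightarrow> x * r \<in> J"
  using ideal unfolding two_sided_ideal_def by blast

lemma two_sided_ideal_uminus: "- 1 \<in> R \<Longrightarrow> x \<in> J \<Longrightarrow> - x \<in> J"
  using two_sided_ideal_mult_left[of x "- 1"] by simp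

lemma two_sided_ideal_diff: "- 1 \<in> R \<Longrightarrow> x \<in> J \<Longrightarrow> y \<in> J \<Longrightarrow> x - y \<in> J"
  using two_sided_ideal_add two_sided_ideal_uminus by (metis diff_conv_add_uminus)

lemmas two_sided_ideal_intros = two_sided_ideal_add two_sided_ideal_diff two_sided_ideal_uminus
  two_sided_ideal_mult_left two_sided_ideal_mult_right

lemma two_sided_ideal_mem_iff_add_mult_unit:
  assumes "- 1 \<in> R" "x \<in> R" "u \<in> R" "v \<in> R"
    and "u * v - 1 \<in> J" and "y + x * u \<in> J"
  shows "x \<in> J \<longleftrightarrow> y \<in> J"
proof
  assume "x \<in> J"
  have "y = (y + x * u) - x * u" by simp
  also have "\<dots> \<in> J" using assms \<open>x \<in> J\<close> by (blast intro: two_sided_ideal_intros)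
  finally show "y \<in> J" .
next
  assume "y \<in> J"
  have "x = (y + x * u) * v - y * v - x * (u * v - 1)" by (simp add: algebra_simps)
  also have "\<dots> \<in> J" using assms \<open>y \<in> J\<close> by (blast intro: two_sided_ideal_intros)
  finally show "x \<in> J" .
qed

end

locale braid_pair_mod =
  fixes R J :: "'a::ring_1 set" and a a' b b' :: 'a
  assumes ideal: "two_sided_ideal R J" and minus_one_mem: "- 1 \<in> R"
    and mult_mem: "\<And>x y. x \<in> R \<Longrightarrow> y \<in> R \<Longrightarrow> x * y \<in> R"
    and mem: "a \<in> R" "a' \<in> R" "b \<in> R" "b' \<in> R"
    and right_inverse_a: "a * a' - 1 \<in> J" and left_inverse_a: "a' * a - 1 \<in> J"
    and right_inverse_b: "b * b' - 1 \<in> J" and left_inverse_b: "b' * b - 1 \<in> J"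
    and braid: "a * b * a - b * a * b \<in> J"
begin

lemmas mem_rules = two_sided_ideal_intros[OF ideal] minus_one_mem mult_mem mem
  right_inverse_a left_inverse_a right_inverse_b left_inverse_b braid

lemma conj_by_b: "b' * a * b - a * b * a' \<in> J"
proof -
  have "b' * a * b - a * b * a' = (b' * (a * b * a - b * a * b) + (b' * b - 1) * a * b) * a'
      - b' * a * b * (a * a' - 1)"
    by (simp add: algebra_simps)
  also have "\<dots> \<in> J" by (blast intro: mem_rules)
  finally show ?thesis .
qed

lemma conj_inv_by_b: "b' * a' * b - a * b' * a' \<in> J"
proof -
  have "b' * a' * b - a * b' * a' =
      ((b' * b - 1) * a - b' * a' * (a * b * a - b * a * b) + b' * (a' * a - 1) * b * a) * b' * a'
      - b' * a' * b * ((a * a' - 1) + a * (b * b' - 1) * a')"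
    by (simp add: algebra_simps)
  also have "\<dots> \<in> J" by (blast intro: mem_rules)
  finally show ?thesis .
qed

lemma braid_inverses: "b' * a' * b' - a' * b' * a' \<in> J"
proof -
  have "b' * a' * b' - a' * b' * a' =
      b' * a' * b' * (- (a * b * (a * a' - 1) * b' * a' + a * (b * b' - 1) * a' + (a * a' - 1)))
      + (b' * a' * b' * (a * b * a - b * a * b) + b' * a' * (b' * b - 1) * a * b
         + b' * (a' * a - 1) * b + (b' * b - 1)) * a' * b' * a'"
    by (simp add: algebra_simps)
  also have "\<dots> \<in> J" by (blast intro: mem_rules)
  finally show ?thesis .
qed

lemma inv_a_braid: "a' * b * a * b - b * a \<in> J"
proof -
  have "a' * b * a * b - b * a = (a' * a - 1) * b * a - a' * (a * b * a - b * a * b)"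
    by (simp add: algebra_simps)
  also have "\<dots> \<in> J" by (blast intro: mem_rules)
  finally show ?thesis .
qed

lemma inv_a_conj_by_b: "a' * b' * a * b - b * a' \<in> J"
proof -
  have "a' * b' * a * b - b * a' = (a' * a - 1) * b * a' + a' * (b' * a * b - a * b * a')"
    by (simp add: algebra_simps)
  also have "\<dots> \<in> J" by (blast intro: mem_rules conj_by_b)
  finally show ?thesis .
qed

end

lemma relY_add_relX_mult_mem:
  assumes braid: "braid_pair_mod R J (s i) (sb i) (s j) (sb j)"
    and sc_mem: "\<And>c. sc c \<in> R"
    and quadratic: "s j * s j + sc (1 - t0 - t1) * s j + sc (t0*t1 - t0 - t1) + sc (t0*t1) * sb j \<in> J"
  shows "relY i j + relX i j * s j \<in> J"
proof -
  define a a' b b' where "a = s i" "a' = sb i" "b = s j" "b' = sb j"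
  interpret braid_pair_mod R J a a' b b'
    using braid by (simp add: a_a'_b_b'_def)
  define q where "q = b * b + sc (1 - t0 - t1) * b + sc (t0*t1 - t0 - t1) + sc (t0*t1) * b'"
  have "q \<in> J"
    using quadratic by (simp add: q_def a_a'_b_b'_def)
  have "relY i j + relX i j * s j =
      (a' * b * a * b - b * a) + (b' * a * b - a * b * a') * b - (a' * b' * a * b - b * a')
      - (b' * a' * b - a * b' * a') * b + a * (b' * b - 1) - a' * (b' * b - 1)
      - (a * b * a - b * a * b) - (b' * a * b - a * b * a')
      - b' * (a * q) + b' * (a' * q) - a * q + a' * q
      + sc (1 - t0 - t1) * (b' * a * b - a * b * a') + sc (t0 + t1) * (b' * a' * b - a * b' * a')
      - sc (t0 * t1) * (b' * a' * b' - a' * b' * a')"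
    unfolding relY_def relZ_def relX_def q_def a_a'_b_b'_def
    by (simp only: sc_hom) (simp add: algebra_simps letter_mult_sc)
  also have "\<dots> \<in> J"
    using \<open>q \<in> J\<close> sc_mem
    by (blast intro: mem_rules inv_a_braid conj_by_b inv_a_conj_by_b conj_inv_by_b braid_inverses)
  finally show ?thesis .
qed

lemma braid_pair_mod_braid_rels:
  assumes "two_sided_ideal (free_alg_n n) J" and "braid_rels n \<subseteq> J"
    and "1 \<le> i" and "i + 1 \<le> n - 1"
  shows "braid_pair_mod (free_alg_n n) J (s i) (sb i) (s (i + 1)) (sb (i + 1))"
proof
  show "- 1 \<in> free_alg_n n"
    using sc_mem_free_alg_n[of "- 1"] by (simp add: sc_hom)
  show "s i \<in> free_alg_n n" "sb i \<in> free_alg_n n" "s (i + 1) \<in> free_alg_n n"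
    "sb (i + 1) \<in> free_alg_n n"
    using assms by (simp_all add: s_mem_free_alg_n sb_mem_free_alg_n)
  show "s i * s (i + 1) * s i - s (i + 1) * s i * s (i + 1) \<in> J"
    using assms unfolding braid_rels_def by blast
  have "i \<le> n - 1" "1 \<le> i + 1"
    using assms by simp_all
  then show "s i * sb i - 1 \<in> J" "sb i * s i - 1 \<in> J"
    "s (i + 1) * sb (i + 1) - 1 \<in> J" "sb (i + 1) * s (i + 1) - 1 \<in> J"
    using assms unfolding braid_rels_def by blast+
qed (fact assms(1) free_alg_n_mult)+

lemma relX_mem_iff_relY_mem:
  assumes "two_sided_ideal (free_alg_n n) J" and "braid_rels n \<union> I_gens n \<subseteq> J"
    and "1 \<le> i" and "i + 1 \<le> n - 1"
  shows "relX i (i + 1) \<in> J \<longleftrightarrow> relY i (i + 1) \<in> J"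
proof -
  interpret braid_pair_mod "free_alg_n n" J "s i" "sb i" "s (i + 1)" "sb (i + 1)"
    using braid_pair_mod_braid_rels assms by blast
  have "1 \<le> i + 1"
    by simp
  then have "s (i + 1) * s (i + 1) + sc (1 - t0 - t1) * s (i + 1) + sc (t0*t1 - t0 - t1)
      + sc (t0*t1) * sb (i + 1) \<in> J"
    using assms unfolding I_gens_def by blast
  then have "relY i (i + 1) + relX i (i + 1) * s (i + 1) \<in> J"
    by (rule relY_add_relX_mult_mem[OF braid_pair_mod_axioms sc_mem_free_alg_n])
  moreover have "relX i (i + 1) \<in> free_alg_n n"
    unfolding relX_def by (intro free_alg_n_add free_alg_n_diff mult_mem mem)
  ultimately show ?thesis
    using two_sided_ideal_mem_iff_add_mult_unit[OF ideal minus_one_mem _ mem(3,4) right_inverse_b]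
    by blast
qed

theorem lemma2p1:
  fixes n i j :: nat
  assumes "n \<ge> 3" and "1 \<le> i" and "i \<le> n - 2" and "j = i + 1"
  shows "ideal_gen (free_alg_n n) (braid_rels n \<union> I_gens n \<union> {relX i j})
       = ideal_gen (free_alg_n n) (braid_rels n \<union> I_gens n \<union> {relY i j})"
proof (rule ideal_gen_insert_cong)
  fix J
  assume "two_sided_ideal (free_alg_n n) J" and "braid_rels n \<union> I_gens n \<subseteq> J"
  moreover have "i + 1 \<le> n - 1"
    using assms by simp
  ultimately show "relX i j \<in> J \<longleftrightarrow> relY i j \<in> J"
    using relX_mem_iff_relY_mem \<open>1 \<le> i\<close> \<open>j = i + 1\<close> by blast
qed

end
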